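(* Let $\mathcal D$ be universal, $\mathrm M=(M,d)\in\mathfrak U_{\mathcal D}$, $A\subseteq M$ finite, $s\in\mathbb N$, and for each $i\in\{0,\dots,s-1\}$ let $\mathfrak t_i$ be a Katětov function of $\mathrm M$ with domain $A$ (not necessarily distinct). Let $d''$ be a metric on the index set $\{0,\dots,s-1\}$ with $d''(i,j)\in d(\mathfrak t_i,\mathfrak t_j)$ for all $i,j$. Define $d'$ on the disjoint union $A\sqcup\{0,\dots,s-1\}$ by $d'(x,y)=d(x,y)$ for $x,y\in A$, $d'(i,j)=d''(i,j)$, and $d'(x,i)=d'(i,x)=\mathfrak t_i(x)$ for $x\in A$. Then $d'$ is a metric, and for every $C\subseteq\{0,\dots,s-1\}$, every isometric embedding $\beta$ of $(A\cup C,d')$ into $\mathrm M$ with $\beta(x)=x$ for all $x\in A$ extends to an isometric embedding $\alpha$ of $(A\cup\{0,\dots,s-1\},d')$ into $\mathrm M$ with $\alpha(i)\in\operatorname{orb}(\mathfrak t_i)$ for all $i$.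
   Context: $\mathcal D$ is a finite subset of $\mathbb R_{\ge0}$ containing $0$. $\mathfrak U_{\mathcal D}$ is the class of countable homogeneous metric spaces (every isometry between finite subspaces extends to an isometry of the space onto itself) with distance set exactly $\mathcal D$ into which every finite metric space with distances in $\mathcal D$ embeds isometrically; $\mathcal D$ is universal if this class is nonempty. A Katětov function of $\mathrm M$ is a map $\mathfrak t:F\to\mathcal D\setminus\{0\}$, $F\subseteq M$ finite, with $|\mathfrak t(x)-\mathfrak t(y)|\le d(x,y)\le\mathfrak t(x)+\mathfrak t(y)$ for all $x,y\in F$; $\operatorname{orb}(\mathfrak t)=\{y\in M\setminus F: d(y,x)=\mathfrak t(x)\ \forall x\in F\}$. $d(\mathfrak s,\mathfrak t)=\{d(x,y):x\in\operatorname{orb}(\mathfrak s),y\in\operatorname{orb}(\mathfrak t)\}$. *)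

theory Defs
  imports Complex_Main "HOL-Library.Countable_Set"
begin

definition metric_on :: "'a set \<Rightarrow> ('a \<Rightarrow> 'a \<Rightarrow> real) \<Rightarrow> bool" where
  "metric_on X e \<longleftrightarrow>
     (\<forall>x\<in>X. \<forall>y\<in>X. e x y \<ge> 0 \<and> (e x y = 0 \<longleftrightarrow> x = y) \<and> e x y = e y x) \<and>
     (\<forall>x\<in>X. \<forall>y\<in>X. \<forall>z\<in>X. e x z \<le> e x y + e y z)"

definition iso_embed :: "'b set \<Rightarrow> ('b \<Rightarrow> 'b \<Rightarrow> real) \<Rightarrow> 'a set \<Rightarrow> ('a \<Rightarrow> 'a \<Rightarrow> real) \<Rightarrow> ('b \<Rightarrow> 'a) \<Rightarrow> bool" where
  "iso_embed X e M d f \<longleftrightarrow> (\<forall>x\<in>X. f x \<in> M) \<and> (\<forall>x\<in>X. \<forall>y\<in>X. d (f x) (f y) = e x y)"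

definition dist_set :: "'a set \<Rightarrow> ('a \<Rightarrow> 'a \<Rightarrow> real) \<Rightarrow> real set" where
  "dist_set M d = {d x y | x y. x \<in> M \<and> y \<in> M}"

definition homogeneous :: "'a set \<Rightarrow> ('a \<Rightarrow> 'a \<Rightarrow> real) \<Rightarrow> bool" where
  "homogeneous M d \<longleftrightarrow>
     (\<forall>F G f. F \<subseteq> M \<and> G \<subseteq> M \<and> finite F \<and> bij_betw f F G \<and>
        (\<forall>x\<in>F. \<forall>y\<in>F. d (f x) (f y) = d x y) \<longrightarrow>
        (\<exists>g. bij_betw g M M \<and> (\<forall>x\<in>M. \<forall>y\<in>M. d (g x) (g y) = d x y) \<and> (\<forall>x\<in>F. g x = f x)))"

text \<open>Every finite metric space with distances in D embeds isometrically.
  Finite metric spaces are represented (up to isometry) on finite subsets of nat.\<close>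
definition embeds_all_finite :: "real set \<Rightarrow> 'a set \<Rightarrow> ('a \<Rightarrow> 'a \<Rightarrow> real) \<Rightarrow> bool" where
  "embeds_all_finite D M d \<longleftrightarrow>
     (\<forall>(X::nat set) e. finite X \<and> metric_on X e \<and> (\<forall>x\<in>X. \<forall>y\<in>X. e x y \<in> D) \<longrightarrow>
        (\<exists>f. iso_embed X e M d f))"

definition in_U :: "real set \<Rightarrow> 'a set \<Rightarrow> ('a \<Rightarrow> 'a \<Rightarrow> real) \<Rightarrow> bool" where
  "in_U D M d \<longleftrightarrow> countable M \<and> metric_on M d \<and> homogeneous M d \<and>
     dist_set M d = D \<and> embeds_all_finite D M d"

text \<open>D is universal iff U_D is nonempty (its members are countable, so a nat carrier suffices).\<close>
definition universal_dset :: "real set \<Rightarrow> bool" where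
  "universal_dset D \<longleftrightarrow> (\<exists>(M::nat set) d. in_U D M d)"

definition katetov :: "real set \<Rightarrow> 'a set \<Rightarrow> ('a \<Rightarrow> 'a \<Rightarrow> real) \<Rightarrow> 'a set \<Rightarrow> ('a \<Rightarrow> real) \<Rightarrow> bool" where
  "katetov D M d F t \<longleftrightarrow> F \<subseteq> M \<and> finite F \<and> (\<forall>x\<in>F. t x \<in> D - {0}) \<and>
     (\<forall>x\<in>F. \<forall>y\<in>F. \<bar>t x - t y\<bar> \<le> d x y \<and> d x y \<le> t x + t y)"

definition orb :: "'a set \<Rightarrow> ('a \<Rightarrow> 'a \<Rightarrow> real) \<Rightarrow> 'a set \<Rightarrow> ('a \<Rightarrow> real) \<Rightarrow> 'a set" where
  "orb M d F t = {y \<in> M - F. \<forall>x\<in>F. d y x = t x}"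

definition kdist :: "'a set \<Rightarrow> ('a \<Rightarrow> 'a \<Rightarrow> real) \<Rightarrow> 'a set \<Rightarrow> ('a \<Rightarrow> real) \<Rightarrow> ('a \<Rightarrow> real) \<Rightarrow> real set" where
  "kdist M d F s t = {d x y | x y. x \<in> orb M d F s \<and> y \<in> orb M d F t}"

fun amalg :: "('a \<Rightarrow> 'a \<Rightarrow> real) \<Rightarrow> (nat \<Rightarrow> 'a \<Rightarrow> real) \<Rightarrow> (nat \<Rightarrow> nat \<Rightarrow> real) \<Rightarrow> 'a + nat \<Rightarrow> 'a + nat \<Rightarrow> real" where
  "amalg d t d'' (Inl x) (Inl y) = d x y"
| "amalg d t d'' (Inr i) (Inr j) = d'' i j"
| "amalg d t d'' (Inl x) (Inr i) = t i x"
| "amalg d t d'' (Inr i) (Inl x) = t i x"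

end

theory Submission
  imports Defs
begin

(*
  (1) amalg d t d'' is a metric.  This is a purely metric fact
      (amalg_metric_on): it needs only positivity and the Katetov
      inequalities of each t i, and the compatibility inequalities
      |t i x - t j x| <= d'' i j <= t i x + t j x, which hold because
      d'' i j is a distance between orbit points (kdist_bounds).  The glued
      distances moreover lie in D (amalg_values_in); both facts are
      specialised to Katetov data in katetov_amalg_metric_on and
      katetov_amalg_values_in.
  (2) Since M is universal and homogeneous, every isometric embedding of a
      subspace of a finite metric space with distances in D extends to the
      whole space (extend_embedding): universality provides some embedding,
      homogeneity moves it onto the prescribed one.
  (3) An embedding fixing A pointwise sends the index point i into the orbit
      of t i (embedding_in_orbit).
*)

lemma metric_on_subset:
  assumes "metric_on S e" and "T \<subseteq> S"
  shows "metric_on T e"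
  using assms unfolding metric_on_def by blast

text \<open>A metric pulls back along an injective map; used to move a finite metric space
  onto a subset of nat, where universality of M applies.\<close>
lemma metric_on_pullback:
  assumes e: "metric_on S e" and h_inj: "inj_on h X" and h_into: "h ` X \<subseteq> S"
  shows "metric_on X (\<lambda>x y. e (h x) (h y))"
  unfolding metric_on_def
proof (intro conjI ballI)
  fix x y assume x: "x \<in> X" and y: "y \<in> X"
  then have hx: "h x \<in> S" and hy: "h y \<in> S" using h_into by auto
  show "e (h x) (h y) \<ge> 0" and "e (h x) (h y) = e (h y) (h x)"
    using e hx hy unfolding metric_on_def by blast+
  have "e (h x) (h y) = 0 \<longleftrightarrow> h x = h y" using e hx hy unfolding metric_on_def by blast
  also have "\<dots> \<longleftrightarrow> x = y" using h_inj x y unfolding inj_on_def by blast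
  finally show "e (h x) (h y) = 0 \<longleftrightarrow> x = y" .
next
  fix x y z assume "x \<in> X" "y \<in> X" "z \<in> X"
  then show "e (h x) (h z) \<le> e (h x) (h y) + e (h y) (h z)"
    using e h_into unfolding metric_on_def by blast
qed

lemma iso_embed_inj_on:
  assumes "metric_on X e" and "metric_on M d" and f: "iso_embed X e M d f"
  shows "inj_on f X"
proof (rule inj_onI)
  fix x y assume x: "x \<in> X" and y: "y \<in> X" and fxy: "f x = f y"
  have "e x y = d (f x) (f x)" using f x y fxy unfolding iso_embed_def by metis
  also have "\<dots> = 0" using assms(2) f x unfolding metric_on_def iso_embed_def by blast
  finally show "x = y" using assms(1) x y unfolding metric_on_def by blast
qed

text \<open>Universality of M, stated for finite metric spaces on an arbitrary carrier type
  (the definition only speaks about finite subsets of nat).\<close>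
lemma embeds_finite_space:
  fixes S :: "'b set" and e :: "'b \<Rightarrow> 'b \<Rightarrow> real"
  assumes emb: "embeds_all_finite D M d" and S_fin: "finite S" and e: "metric_on S e"
    and e_D: "\<forall>x\<in>S. \<forall>y\<in>S. e x y \<in> D"
  shows "\<exists>f. iso_embed S e M d f"
proof -
  define X where "X = {0..<card S}"
  obtain h where h: "bij_betw h X S" using ex_bij_betw_nat_finite[OF S_fin] X_def by blast
  have h_inj: "inj_on h X" and h_onto: "h ` X = S" using h unfolding bij_betw_def by auto
  have "metric_on X (\<lambda>x y. e (h x) (h y))"
    using metric_on_pullback[OF e h_inj] h_onto by blast
  moreover have "\<forall>x\<in>X. \<forall>y\<in>X. e (h x) (h y) \<in> D" using e_D h_onto by blast
  ultimately obtain f where f: "iso_embed X (\<lambda>x y. e (h x) (h y)) M d f"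
    using emb unfolding embeds_all_finite_def X_def by blast
  have inv: "inv_into X h z \<in> X" "h (inv_into X h z) = z" if "z \<in> S" for z
    using that h_onto inv_into_into[of z h X] f_inv_into_f[of z h X] by auto
  have "iso_embed S e M d (f \<circ> inv_into X h)"
    unfolding iso_embed_def
  proof (intro conjI ballI)
    fix z assume z: "z \<in> S"
    show "(f \<circ> inv_into X h) z \<in> M" using f inv(1)[OF z] unfolding iso_embed_def by simp
  next
    fix z w assume z: "z \<in> S" and w: "w \<in> S"
    show "d ((f \<circ> inv_into X h) z) ((f \<circ> inv_into X h) w) = e z w"
      using f inv[OF z] inv[OF w] unfolding iso_embed_def by simp
  qed
  then show ?thesis by blast
qed

lemma homogeneous_realign:
  assumes hom: "homogeneous M d" and M: "metric_on M d"
    and e: "metric_on S e" and S_fin: "finite S" and TS: "T \<subseteq> S"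
    and f: "iso_embed S e M d f" and \<beta>: "iso_embed T e M d \<beta>"
  shows "\<exists>\<alpha>. iso_embed S e M d \<alpha> \<and> (\<forall>z\<in>T. \<alpha> z = \<beta> z)"
proof -
  have eT: "metric_on T e" using metric_on_subset[OF e TS] .
  have fT: "iso_embed T e M d f" using f TS unfolding iso_embed_def by blast
  have f_inj: "inj_on f T" using iso_embed_inj_on[OF eT M fT] .
  have \<beta>_inj: "inj_on \<beta> T" using iso_embed_inj_on[OF eT M \<beta>] .
  define g0 where "g0 = \<beta> \<circ> inv_into T f"
  have g0f: "g0 (f z) = \<beta> z" if "z \<in> T" for z using f_inj that unfolding g0_def by auto
  have "bij_betw g0 (f ` T) (\<beta> ` T)"
    using f_inj \<beta>_inj g0f unfolding bij_betw_def inj_on_def by (auto simp: image_iff)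
  moreover have "\<forall>x\<in>f ` T. \<forall>y\<in>f ` T. d (g0 x) (g0 y) = d x y"
    using g0f fT \<beta> unfolding iso_embed_def by auto
  moreover have "f ` T \<subseteq> M" "\<beta> ` T \<subseteq> M" "finite (f ` T)"
    using fT \<beta> S_fin TS finite_subset unfolding iso_embed_def by auto
  ultimately obtain g where g: "bij_betw g M M" "\<forall>x\<in>M. \<forall>y\<in>M. d (g x) (g y) = d x y"
      "\<forall>x\<in>f ` T. g x = g0 x"
    using hom[unfolded homogeneous_def, rule_format, of "f ` T" "\<beta> ` T" g0] by blast
  have "iso_embed S e M d (g \<circ> f)"
    using g(1,2) f unfolding iso_embed_def bij_betw_def by auto
  moreover have "\<forall>z\<in>T. (g \<circ> f) z = \<beta> z" using g(3) g0f by auto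
  ultimately show ?thesis by blast
qed

lemma extend_embedding:
  assumes M_U: "in_U D M d" and S_fin: "finite S" and e: "metric_on S e"
    and e_D: "\<forall>x\<in>S. \<forall>y\<in>S. e x y \<in> D" and TS: "T \<subseteq> S" and \<beta>: "iso_embed T e M d \<beta>"
  shows "\<exists>\<alpha>. iso_embed S e M d \<alpha> \<and> (\<forall>z\<in>T. \<alpha> z = \<beta> z)"
proof -
  have "embeds_all_finite D M d" "homogeneous M d" "metric_on M d"
    using M_U unfolding in_U_def by auto
  then show ?thesis
    using embeds_finite_space[OF _ S_fin e e_D] homogeneous_realign[OF _ _ e S_fin TS _ \<beta>]
    by blast
qed

text \<open>A distance realised between the orbits of two Katetov functions s, t over A
  satisfies the triangle constraints with s x and t x for every x in A; this is why d''
  is compatible with the t i.\<close>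
lemma kdist_bounds:
  assumes M: "metric_on M d" and A: "A \<subseteq> M"
    and r: "r \<in> kdist M d A s t" and x: "x \<in> A"
  shows "\<bar>s x - t x\<bar> \<le> r \<and> r \<le> s x + t x"
proof -
  obtain u v where u: "u \<in> orb M d A s" and v: "v \<in> orb M d A t" and r_uv: "r = d u v"
    using r unfolding kdist_def by blast
  have uM: "u \<in> M" and ux: "d u x = s x" and vM: "v \<in> M" and vx: "d v x = t x"
    using u v x unfolding orb_def by auto
  have xM: "x \<in> M" using x A by blast
  have "d u x \<le> d u v + d v x" "d v x \<le> d v u + d u x" "d u v \<le> d u x + d x v"
    "d v u = d u v" "d x v = d v x"
    using M uM vM xM unfolding metric_on_def by blast+
  then show ?thesis using ux vx r_uv unfolding abs_le_iff by linarith
qed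

lemma dist_in_dist_set: "x \<in> M \<Longrightarrow> y \<in> M \<Longrightarrow> d x y \<in> dist_set M d"
  unfolding dist_set_def by blast

lemma kdist_subset_dist_set: "kdist M d A s t \<subseteq> dist_set M d"
  unfolding kdist_def orb_def dist_set_def by blast

lemma katetov_pos:
  assumes "katetov D M d A t" and "\<forall>r\<in>D. r \<ge> 0" and "x \<in> A"
  shows "t x > 0"
proof -
  have "t x \<in> D - {0}" using assms(1,3) unfolding katetov_def by blast
  then show ?thesis using assms(2) by force
qed

lemma amalg_metric_on:
  assumes dA: "metric_on A d" and dI: "metric_on I d''"
    and t_pos: "\<forall>i\<in>I. \<forall>x\<in>A. t i x > 0"
    and t_kat: "\<forall>i\<in>I. \<forall>x\<in>A. \<forall>y\<in>A. \<bar>t i x - t i y\<bar> \<le> d x y \<and> d x y \<le> t i x + t i y"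
    and compat: "\<forall>i\<in>I. \<forall>j\<in>I. \<forall>x\<in>A. \<bar>t i x - t j x\<bar> \<le> d'' i j \<and> d'' i j \<le> t i x + t j x"
  shows "metric_on (Inl ` A \<union> Inr ` I) (amalg d t d'')"
proof -
  let ?S = "Inl ` A \<union> Inr ` I" and ?e = "amalg d t d''"
  have basic: "\<forall>p\<in>?S. \<forall>q\<in>?S. ?e p q \<ge> 0 \<and> (?e p q = 0 \<longleftrightarrow> p = q) \<and> ?e p q = ?e q p"
  proof (intro ballI, elim UnE imageE)
  qed (use dA dI t_pos in \<open>fastforce simp: metric_on_def\<close>)+
  have tri_A: "d x z \<le> d x y + d y z" if "x \<in> A" "y \<in> A" "z \<in> A" for x y z
    using dA that unfolding metric_on_def by blast
  have tri_I: "d'' i k \<le> d'' i j + d'' j k" if "i \<in> I" "j \<in> I" "k \<in> I" for i j k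
    using dI that unfolding metric_on_def by blast
  have tri_iAA: "t i x \<le> d x y + t i y" "t i y \<le> t i x + d x y" "d x y \<le> t i x + t i y"
    if "i \<in> I" "x \<in> A" "y \<in> A" for i x y
  proof -
    have "\<bar>t i x - t i y\<bar> \<le> d x y \<and> d x y \<le> t i x + t i y" using t_kat that by blast
    then show "t i x \<le> d x y + t i y" "t i y \<le> t i x + d x y" "d x y \<le> t i x + t i y"
      by (auto simp: abs_le_iff)
  qed
  have tri_ijA: "t i x \<le> d'' i j + t j x" "t j x \<le> t i x + d'' i j" "d'' i j \<le> t i x + t j x"
    if "i \<in> I" "j \<in> I" "x \<in> A" for i j x
  proof -
    have "\<bar>t i x - t j x\<bar> \<le> d'' i j \<and> d'' i j \<le> t i x + t j x" using compat that by blast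
    then show "t i x \<le> d'' i j + t j x" "t j x \<le> t i x + d'' i j" "d'' i j \<le> t i x + t j x"
      by (auto simp: abs_le_iff)
  qed
  have triangle: "\<forall>p\<in>?S. \<forall>q\<in>?S. \<forall>r\<in>?S. ?e p r \<le> ?e p q + ?e q r"
  proof (intro ballI, elim UnE imageE)
  qed (simp_all add: tri_A tri_I tri_iAA tri_ijA)
  show ?thesis unfolding metric_on_def using basic triangle by (rule conjI)
qed

lemma amalg_values_in:
  assumes "\<forall>x\<in>A. \<forall>y\<in>A. d x y \<in> D" and "\<forall>i\<in>I. \<forall>x\<in>A. t i x \<in> D"
    and "\<forall>i\<in>I. \<forall>j\<in>I. d'' i j \<in> D"
  shows "\<forall>p\<in>Inl ` A \<union> Inr ` I. \<forall>q\<in>Inl ` A \<union> Inr ` I. amalg d t d'' p q \<in> D"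
proof (intro ballI, elim UnE imageE)
qed (simp_all add: assms)

lemma katetov_amalg_metric_on:
  assumes M: "metric_on M d" and A: "A \<subseteq> M" and D_nonneg: "\<forall>r\<in>D. r \<ge> 0"
    and t_kat: "\<forall>i\<in>I. katetov D M d A (t i)" and dI: "metric_on I d''"
    and d''_in: "\<forall>i\<in>I. \<forall>j\<in>I. d'' i j \<in> kdist M d A (t i) (t j)"
  shows "metric_on (Inl ` A \<union> Inr ` I) (amalg d t d'')"
proof (rule amalg_metric_on[OF metric_on_subset[OF M A] dI]; intro ballI)
  fix i x y assume i: "i \<in> I" and x: "x \<in> A" and y: "y \<in> A"
  have kat_i: "katetov D M d A (t i)" using t_kat i by blast
  show "t i x > 0" by (rule katetov_pos[OF kat_i D_nonneg x])
  show "\<bar>t i x - t i y\<bar> \<le> d x y \<and> d x y \<le> t i x + t i y"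
    using kat_i x y unfolding katetov_def by blast
next
  fix i j x assume "i \<in> I" and "j \<in> I" and x: "x \<in> A"
  then have "d'' i j \<in> kdist M d A (t i) (t j)" using d''_in by blast
  from kdist_bounds[OF M A this x]
  show "\<bar>t i x - t j x\<bar> \<le> d'' i j \<and> d'' i j \<le> t i x + t j x" .
qed

lemma katetov_amalg_values_in:
  assumes dist_D: "dist_set M d = D" and A: "A \<subseteq> M"
    and t_kat: "\<forall>i\<in>I. katetov D M d A (t i)"
    and d''_in: "\<forall>i\<in>I. \<forall>j\<in>I. d'' i j \<in> kdist M d A (t i) (t j)"
  shows "\<forall>p\<in>Inl ` A \<union> Inr ` I. \<forall>q\<in>Inl ` A \<union> Inr ` I. amalg d t d'' p q \<in> D"
proof (rule amalg_values_in; intro ballI)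
  fix x y assume "x \<in> A" and "y \<in> A"
  then show "d x y \<in> D" using A dist_in_dist_set[of x M y d] dist_D by blast
next
  fix i x assume "i \<in> I" and "x \<in> A"
  then show "t i x \<in> D" using t_kat unfolding katetov_def by blast
next
  fix i j assume "i \<in> I" and "j \<in> I"
  then have "d'' i j \<in> kdist M d A (t i) (t j)" using d''_in by blast
  then show "d'' i j \<in> D" using kdist_subset_dist_set dist_D by blast
qed

lemma embedding_in_orbit:
  assumes M: "metric_on M d" and \<alpha>: "iso_embed (Inl ` A \<union> Inr ` I) (amalg d t d'') M d \<alpha>"
    and fix_A: "\<forall>x\<in>A. \<alpha> (Inl x) = x" and i: "i \<in> I" and t_pos: "\<forall>x\<in>A. t i x > 0"
  shows "\<alpha> (Inr i) \<in> orb M d A (t i)"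
proof -
  have \<alpha>i: "\<alpha> (Inr i) \<in> M" using \<alpha> i unfolding iso_embed_def by blast
  have dist_A: "d (\<alpha> (Inr i)) x = t i x" if x: "x \<in> A" for x
  proof -
    have "d (\<alpha> (Inr i)) (\<alpha> (Inl x)) = amalg d t d'' (Inr i) (Inl x)"
      using \<alpha> i x unfolding iso_embed_def by blast
    then show ?thesis using fix_A x by simp
  qed
  have "\<alpha> (Inr i) \<notin> A"
  proof
    assume "\<alpha> (Inr i) \<in> A"
    moreover have "d (\<alpha> (Inr i)) (\<alpha> (Inr i)) = 0" using M \<alpha>i unfolding metric_on_def by blast
    ultimately show False using dist_A t_pos by force
  qed
  then show ?thesis using \<alpha>i dist_A unfolding orb_def by blast
qed

theorem lemma4p2:
  fixes D :: "real set" and M :: "'a set" and d :: "'a \<Rightarrow> 'a \<Rightarrow> real"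
    and A :: "'a set" and s :: nat and t :: "nat \<Rightarrow> 'a \<Rightarrow> real"
    and d'' :: "nat \<Rightarrow> nat \<Rightarrow> real"
  assumes D_fin: "finite D" and D_nonneg: "\<forall>r\<in>D. r \<ge> 0" and D_0: "0 \<in> D"
    and D_univ: "universal_dset D"
    and M_U: "in_U D M d"
    and A_sub: "A \<subseteq> M" and A_fin: "finite A"
    and t_kat: "\<forall>i<s. katetov D M d A (t i)"
    and d''_metric: "metric_on {..<s} d''"
    and d''_in: "\<forall>i<s. \<forall>j<s. d'' i j \<in> kdist M d A (t i) (t j)"
  shows "metric_on (Inl ` A \<union> Inr ` {..<s}) (amalg d t d'') \<and>
    (\<forall>C \<subseteq> {..<s}. \<forall>\<beta>.
       iso_embed (Inl ` A \<union> Inr ` C) (amalg d t d'') M d \<beta> \<and> (\<forall>x\<in>A. \<beta> (Inl x) = x) \<longrightarrow>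
       (\<exists>\<alpha>. iso_embed (Inl ` A \<union> Inr ` {..<s}) (amalg d t d'') M d \<alpha> \<and>
            (\<forall>z \<in> Inl ` A \<union> Inr ` C. \<alpha> z = \<beta> z) \<and>
            (\<forall>i<s. \<alpha> (Inr i) \<in> orb M d A (t i))))"
proof -
  let ?S = "Inl ` A \<union> Inr ` {..<s}" and ?e = "amalg d t d''"
  have M: "metric_on M d" and dist_D: "dist_set M d = D" using M_U unfolding in_U_def by auto
  have kat: "\<forall>i\<in>{..<s}. katetov D M d A (t i)" using t_kat by simp
  have realised: "\<forall>i\<in>{..<s}. \<forall>j\<in>{..<s}. d'' i j \<in> kdist M d A (t i) (t j)" using d''_in by simp
  have metric: "metric_on ?S ?e"
    using katetov_amalg_metric_on[OF M A_sub D_nonneg kat d''_metric realised] .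
  have in_D: "\<forall>p\<in>?S. \<forall>q\<in>?S. ?e p q \<in> D"
    using katetov_amalg_values_in[OF dist_D A_sub kat realised] .
  show ?thesis
  proof (intro conjI metric allI impI)
    fix C \<beta> assume C: "C \<subseteq> {..<s}"
      and \<beta>: "iso_embed (Inl ` A \<union> Inr ` C) ?e M d \<beta> \<and> (\<forall>x\<in>A. \<beta> (Inl x) = x)"
    have "finite ?S" using A_fin by simp
    moreover have "Inl ` A \<union> Inr ` C \<subseteq> ?S" using C by blast
    ultimately obtain \<alpha> where \<alpha>: "iso_embed ?S ?e M d \<alpha>" "\<forall>z\<in>Inl ` A \<union> Inr ` C. \<alpha> z = \<beta> z"
      using extend_embedding[OF M_U _ metric in_D _ conjunct1[OF \<beta>]] by blast
    have \<alpha>_fix: "\<forall>x\<in>A. \<alpha> (Inl x) = x" using \<alpha>(2) \<beta> by simp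
    have "\<alpha> (Inr i) \<in> orb M d A (t i)" if "i < s" for i
    proof (rule embedding_in_orbit[OF M \<alpha>(1) \<alpha>_fix])
      have "katetov D M d A (t i)" using t_kat that by blast
      then show "\<forall>x\<in>A. t i x > 0" by (intro ballI katetov_pos[OF _ D_nonneg])
    qed (use that in simp)
    with \<alpha> show "\<exists>\<alpha>. iso_embed ?S ?e M d \<alpha> \<and> (\<forall>z\<in>Inl ` A \<union> Inr ` C. \<alpha> z = \<beta> z) \<and>
        (\<forall>i<s. \<alpha> (Inr i) \<in> orb M d A (t i))" by blast
  qed
qed

end
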